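(* Let $\mathcal{Q}$ be a family of Boolean constraints. If there exists a polynomial \texttt{upi} encoding for $\mathcal{Q}$, then there exists a polynomial \texttt{upac} encoding for $\mathcal{Q}$. That is: if there is a polynomial $P$ such that every $q\in\mathcal{Q}$ on $n$ variables has a \texttt{upi} \textsc{cnf} encoding of size at most $P(n)$, then there is a polynomial $P'$ such that every $q\in\mathcal{Q}$ on $n$ variables has a \textsc{cnf} encoding of size at most $P'(n)$ that is both \texttt{upi} and \texttt{upac}.
   Context: Assignments: an assignment of a Boolean variable $v$ is $[v,1]$ (also written $[v]$) or $[v,0]$ (also written $[\neg v]$); for a literal $\omega$, $[\omega]$ is the assignment making $\omega$ true. For a set $V$ of Boolean variables, $\mathcal{A}_V$ is the set of complete non-contradictory assignments on $V$ (exactly one value per variable) and $\mathcal{I}_V$ the set of partial non-contradictory assignments (at most one value per variable). $\mathtt{lit}(V)=\bigcup_{v\in V}\{v,\neg v\}$. The size of a \textsc{cnf} formula is the total number of literal occurrences in its clauses. For a \textsc{cnf} formula $\Sigma$ and an assignment $I$, $\Sigma|_I$ is $\Sigma$ together with the unit clause $(v)$ for each $[v,1]\in I$ and $(\neg v)$ for each $[v,0]\in I$. Unit resolution: given an assignment $U$, a clause $c$ is unit w.r.t. $U$ if $U$ falsifies all literals of $c$ except exactly one, its active literal $\omega$. Unit resolution on $\Sigma$ starts with $U=\emptyset$ and repeatedly adds $[\omega]$ for active literals $\omega$ of unit clauses w.r.t. $U$, until $U$ is contradictory (contains $[v,0]$ and $[v,1]$ for some $v$) or nothing new can be added. It "produces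 the empty clause" iff $U$ becomes contradictory, and "infers $[\omega]$" iff $[\omega]$ is added to $U$. Constraints: a Boolean constraint $q$ on a finite variable set $V$ is any representation of a function $h_q:\mathcal{A}_V\to\{\mathtt{sat},\mathtt{unsat}\}$; $A\in\mathcal{A}_V$ satisfies $q$ iff $h_q(A)=\mathtt{sat}$, otherwise falsifies it. A partial assignment $I\in\mathcal{I}_V$ falsifies $q$ iff every $A\in\mathcal{A}_V$ with $I\subseteq A$ falsifies $q$. A \textsc{cnf} encoding of $q$ is a \textsc{cnf} formula $\Sigma_q$ (possibly with extra variables outside $V$) such that for every $A\in\mathcal{A}_V$, $\Sigma_q|_A$ is satisfiable iff $A$ satisfies $q$. It is \texttt{upi} if for every $I\in\mathcal{I}_V$, unit resolution on $\Sigma_q|_I$ produces the empty clause iff $I$ falsifies $q$. It is \texttt{upac} if for every $I\in\mathcal{I}_V$ that does not falsify $q$ and every literal $\omega\in\mathtt{lit}(V)$ with $[\omega]\notin I$, unit resolution on $\Sigma_q|_I$ does not produce the empty clause, and it infers $[\omega]$ iff $I\cup\{[\neg\omega]\}$ falsifies $q$. An encoding scheme for a family $\mathcal{Q}$ is polynomial if the size of the encoding of each $q\in\mathcal{Q}$ is bounded by a fixed polynomial in the number of variables of $q$. *)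

theory Defs
  imports "HOL-Computational_Algebra.Polynomial"
begin

text \<open>Boolean variables are natural numbers (an infinite supply, so that encodings
may use auxiliary variables outside the constraint's variables).
A literal is a pair (v, b): (v, True) is the literal v, (v, False) is the literal not v.
The assignment [omega] making literal omega true is identified with the pair omega itself;
an assignment is a set of such pairs.\<close>

type_synonym var = nat
type_synonym lit = "var \<times> bool"
type_synonym assignment = "lit set"
type_synonym clause = "lit list"
type_synonym cnf = "clause list"

definition neg_lit :: "lit \<Rightarrow> lit" where
  "neg_lit l = (fst l, \<not> snd l)"

definition lits_of :: "var set \<Rightarrow> lit set" where
  "lits_of V = V \<times> UNIV"

definition contradictory :: "assignment \<Rightarrow> bool" where
  "contradictory U \<longleftrightarrow> (\<exists>v. (v, True) \<in> U \<and> (v, False) \<in> U)"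

definition falsifies_lit :: "assignment \<Rightarrow> lit \<Rightarrow> bool" where
  "falsifies_lit U l \<longleftrightarrow> neg_lit l \<in> U"

definition complete_assignments :: "var set \<Rightarrow> assignment set" where
  "complete_assignments V =
     {A. A \<subseteq> lits_of V \<and> (\<forall>v\<in>V. \<exists>!b. (v, b) \<in> A)}"

definition partial_assignments :: "var set \<Rightarrow> assignment set" where
  "partial_assignments V = {I. I \<subseteq> lits_of V \<and> \<not> contradictory I}"

definition cnf_size :: "cnf \<Rightarrow> nat" where
  "cnf_size \<Sigma> = sum_list (map length \<Sigma>)"

definition restrict :: "cnf \<Rightarrow> assignment \<Rightarrow> clause set" where
  "restrict \<Sigma> I = set \<Sigma> \<union> {[l] | l. l \<in> I}"

definition clause_sat :: "(var \<Rightarrow> bool) \<Rightarrow> clause \<Rightarrow> bool" where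
  "clause_sat \<tau> c \<longleftrightarrow> (\<exists>(v, b) \<in> set c. \<tau> v = b)"

definition satisfiable :: "clause set \<Rightarrow> bool" where
  "satisfiable F \<longleftrightarrow> (\<exists>\<tau>. \<forall>c\<in>F. clause_sat \<tau> c)"

definition unit_wrt :: "assignment \<Rightarrow> clause \<Rightarrow> lit \<Rightarrow> bool" where
  "unit_wrt U c l \<longleftrightarrow> l \<in> set c \<and> (\<forall>l'\<in>set c. l' \<noteq> l \<longrightarrow> falsifies_lit U l')"

inductive up_reach :: "clause set \<Rightarrow> assignment \<Rightarrow> bool" for F where
  start: "up_reach F {}"
| step: "\<lbrakk>up_reach F U; \<not> contradictory U; c \<in> F; unit_wrt U c l\<rbrakk>
          \<Longrightarrow> up_reach F (insert l U)"

definition up_empty_clause :: "clause set \<Rightarrow> bool" where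
  "up_empty_clause F \<longleftrightarrow> (\<exists>U. up_reach F U \<and> contradictory U)"

definition up_infers :: "clause set \<Rightarrow> lit \<Rightarrow> bool" where
  "up_infers F l \<longleftrightarrow> (\<exists>U. up_reach F U \<and> l \<in> U)"

text \<open>A Boolean constraint: a finite variable set V together with the function h_q,
given as a predicate on assignments (only its values on complete assignments on V matter;
True = sat).\<close>
type_synonym constraint = "var set \<times> (assignment \<Rightarrow> bool)"

definition cvars :: "constraint \<Rightarrow> var set" where
  "cvars q = fst q"

definition satisfies :: "assignment \<Rightarrow> constraint \<Rightarrow> bool" where
  "satisfies A q \<longleftrightarrow> snd q A"

definition falsifies :: "assignment \<Rightarrow> constraint \<Rightarrow> bool" where
  "falsifies I q \<longleftrightarrow>
     (\<forall>A\<in>complete_assignments (cvars q). I \<subseteq> A \<longrightarrow> \<not> satisfies A q)"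

definition is_encoding :: "cnf \<Rightarrow> constraint \<Rightarrow> bool" where
  "is_encoding \<Sigma> q \<longleftrightarrow>
     (\<forall>A\<in>complete_assignments (cvars q). satisfiable (restrict \<Sigma> A) \<longleftrightarrow> satisfies A q)"

definition is_upi :: "cnf \<Rightarrow> constraint \<Rightarrow> bool" where
  "is_upi \<Sigma> q \<longleftrightarrow>
     (\<forall>I\<in>partial_assignments (cvars q). up_empty_clause (restrict \<Sigma> I) \<longleftrightarrow> falsifies I q)"

definition is_upac :: "cnf \<Rightarrow> constraint \<Rightarrow> bool" where
  "is_upac \<Sigma> q \<longleftrightarrow>
     (\<forall>I\<in>partial_assignments (cvars q). \<not> falsifies I q \<longrightarrow>
        (\<forall>\<omega>\<in>lits_of (cvars q). \<omega> \<notin> I \<longrightarrow>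
           \<not> up_empty_clause (restrict \<Sigma> I) \<and>
           (up_infers (restrict \<Sigma> I) \<omega> \<longleftrightarrow> falsifies (insert (neg_lit \<omega>) I) q)))"

end

theory Submission
  imports Defs "HOL-Library.Nat_Bijection"
begin

(* Let S be a UPI encoding of a constraint q on the variables V.  For every literal w on V we
   add a copy of S over fresh variables p(w,l), one for each literal l, read as "unit propagation
   on S restricted by I and the opposite of w derives l".  The copy contains
     - for every clause c of S and l in c, the propagation clause  (AND_{l' in c, l' ~= l} p(w,~l')) --> p(w,l),
     - the input clauses  l --> p(w,l)  for l a literal on V,
     - the unit clause  p(w,~w),
     - the conflict clauses  p(w,v) AND p(w,~v) --> w.
   Unit resolution on the enlarged formula C restricted by I simulates unit resolution on S
   restricted by I + {~w} inside the copy for w, and a conflict there yields w.  Semantically,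
   p(w,l) := (w in A or l true) extends any model of S|A, so C is still an encoding of q. *)

definition lit_true :: "(var \<Rightarrow> bool) \<Rightarrow> lit \<Rightarrow> bool" where
  "lit_true \<tau> l \<longleftrightarrow> \<tau> (fst l) = snd l"

lemma lit_true_neg [simp]: "lit_true \<tau> (neg_lit l) \<longleftrightarrow> \<not> lit_true \<tau> l"
  by (simp add: lit_true_def neg_lit_def)

lemma clause_sat_iff: "clause_sat \<tau> c \<longleftrightarrow> (\<exists>l\<in>set c. lit_true \<tau> l)"
  unfolding clause_sat_def lit_true_def by (simp add: case_prod_unfold)

lemma restrict_mono: "set S \<subseteq> set T \<Longrightarrow> I \<subseteq> J \<Longrightarrow> restrict S I \<subseteq> restrict T J"
  by (auto simp: restrict_def)

lemma satisfiable_subset: "F \<subseteq> G \<Longrightarrow> satisfiable G \<Longrightarrow> satisfiable F"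
  by (auto simp: satisfiable_def)

lemma model_restrict_unit:
  assumes "\<forall>c\<in>restrict \<Sigma> I. clause_sat \<tau> c" and "l \<in> I"
  shows "lit_true \<tau> l"
proof -
  have "[l] \<in> restrict \<Sigma> I" using assms(2) unfolding restrict_def by blast
  then have "clause_sat \<tau> [l]" using assms(1) by blast
  then show ?thesis by (simp add: clause_sat_iff)
qed

section \<open>General facts about unit resolution\<close>

lemma up_reach_sound:
  assumes model: "\<forall>c\<in>F. clause_sat \<tau> c"
  shows "up_reach F U \<Longrightarrow> \<forall>l\<in>U. lit_true \<tau> l"
proof (induction rule: up_reach.induct)
  case start
  then show ?case by simp
next
  case (step U c l)
  then obtain l0 where l0: "l0 \<in> set c" "lit_true \<tau> l0"
    using model by (auto simp: clause_sat_iff)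
  have "l0 = l"
  proof (rule ccontr)
    assume "l0 \<noteq> l"
    with step.hyps(4) l0(1) have "neg_lit l0 \<in> U"
      by (auto simp: unit_wrt_def falsifies_lit_def)
    with step.IH l0(2) show False by auto
  qed
  with l0 step.IH show ?case by auto
qed

lemma up_empty_clause_unsat: "up_empty_clause F \<Longrightarrow> \<not> satisfiable F"
proof
  assume "up_empty_clause F" "satisfiable F"
  then obtain U \<tau> where U: "up_reach F U" "contradictory U" and model: "\<forall>c\<in>F. clause_sat \<tau> c"
    by (auto simp: up_empty_clause_def satisfiable_def)
  have true: "\<forall>l\<in>U. lit_true \<tau> l" using model U(1) by (rule up_reach_sound)
  from U(2) obtain v where "(v, True) \<in> U" "(v, False) \<in> U" by (auto simp: contradictory_def)
  with true have "lit_true \<tau> (v, True)" "lit_true \<tau> (v, False)" by auto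
  then show False by (simp add: lit_true_def)
qed

lemma up_reach_mono: "up_reach F U \<Longrightarrow> F \<subseteq> G \<Longrightarrow> up_reach G U"
  by (induction rule: up_reach.induct) (auto intro: up_reach.intros)

lemma up_empty_clause_mono: "up_empty_clause F \<Longrightarrow> F \<subseteq> G \<Longrightarrow> up_empty_clause G"
  by (auto simp: up_empty_clause_def intro: up_reach_mono)

lemma up_reach_vars: "up_reach F U \<Longrightarrow> l \<in> U \<Longrightarrow> fst l \<in> fst ` (\<Union>c\<in>F. set c)"
  by (induction rule: up_reach.induct) (auto simp: unit_wrt_def)

lemma up_reach_units:
  assumes "finite J" "J \<subseteq> I" "\<not> contradictory I"
  shows "up_reach (restrict \<Sigma> I) J"
  using assms
proof (induction J rule: finite_induct)
  case empty
  show ?case by (rule up_reach.start)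
next
  case (insert x J)
  have "up_reach (restrict \<Sigma> I) J" using insert by auto
  moreover have "\<not> contradictory J" using insert by (auto simp: contradictory_def)
  moreover have "[x] \<in> restrict \<Sigma> I" using insert unfolding restrict_def by blast
  moreover have "unit_wrt J [x] x" by (simp add: unit_wrt_def)
  ultimately show ?case by (rule up_reach.step)
qed

section \<open>An abstract criterion for UPI and UPAC\<close>

lemma encoding_satisfiable:
  assumes enc: "is_encoding C q" and nf: "\<not> falsifies I q"
  shows "satisfiable (restrict C I)"
proof -
  from nf obtain A where A: "A \<in> complete_assignments (cvars q)" "I \<subseteq> A" "satisfies A q"
    by (auto simp: falsifies_def)
  with enc have "satisfiable (restrict C A)" by (simp add: is_encoding_def)
  moreover have "restrict C I \<subseteq> restrict C A" using A(2) by (rule restrict_mono[OF order_refl])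
  ultimately show ?thesis by (rule satisfiable_subset[rotated])
qed

lemma insert_neg_partial:
  assumes "I \<in> partial_assignments V" "w \<in> lits_of V" "w \<notin> I"
  shows "insert (neg_lit w) I \<in> partial_assignments V"
  using assms by (cases w; cases "snd w")
    (auto simp: partial_assignments_def contradictory_def lits_of_def neg_lit_def)

lemma upi_of_superset:
  assumes enc: "is_encoding C q" and sub: "set S \<subseteq> set C" and upi: "is_upi S q"
  shows "is_upi C q"
  unfolding is_upi_def
proof (intro ballI iffI)
  fix I assume "I \<in> partial_assignments (cvars q)" "falsifies I q"
  with upi have "up_empty_clause (restrict S I)" by (simp add: is_upi_def)
  then show "up_empty_clause (restrict C I)"
    by (rule up_empty_clause_mono) (rule restrict_mono[OF sub order_refl])
next
  fix I assume "up_empty_clause (restrict C I)"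
  then show "falsifies I q"
    using encoding_satisfiable[OF enc] up_empty_clause_unsat by blast
qed

lemma upac_of_superset:
  assumes enc: "is_encoding C q" and sub: "set S \<subseteq> set C" and upi: "is_upi S q"
    and derives: "\<And>I w. I \<in> partial_assignments (cvars q) \<Longrightarrow> w \<in> lits_of (cvars q) \<Longrightarrow>
        up_empty_clause (restrict S (insert (neg_lit w) I)) \<Longrightarrow> up_infers (restrict C I) w"
  shows "is_upac C q"
  unfolding is_upac_def
proof (intro ballI impI conjI iffI)
  fix I w assume I: "I \<in> partial_assignments (cvars q)" and nf: "\<not> falsifies I q"
  show "\<not> up_empty_clause (restrict C I)"
    using encoding_satisfiable[OF enc nf] up_empty_clause_unsat by blast
  assume w: "w \<in> lits_of (cvars q)" "w \<notin> I"
  {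
    assume "falsifies (insert (neg_lit w) I) q"
    with upi insert_neg_partial[OF I w] have "up_empty_clause (restrict S (insert (neg_lit w) I))"
      by (simp add: is_upi_def)
    then show "up_infers (restrict C I) w" using derives I w(1) by blast
  next
    assume inf: "up_infers (restrict C I) w"
    show "falsifies (insert (neg_lit w) I) q"
    proof (rule ccontr)
      assume "\<not> falsifies (insert (neg_lit w) I) q"
      then obtain \<tau> where \<tau>: "\<forall>c\<in>restrict C (insert (neg_lit w) I). clause_sat \<tau> c"
        using encoding_satisfiable[OF enc] by (auto simp: satisfiable_def)
      then have "\<not> lit_true \<tau> w" using model_restrict_unit[OF \<tau>, of "neg_lit w"] by simp
      moreover have "\<forall>c\<in>restrict C I. clause_sat \<tau> c" using \<tau> by (auto simp: restrict_def)
      ultimately show False using inf up_reach_sound by (auto simp: up_infers_def)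
    qed
  }
qed

section \<open>The construction\<close>

definition code_lit :: "lit \<Rightarrow> nat" where
  "code_lit l = 2 * fst l + (if snd l then 1 else 0)"

definition decode_lit :: "nat \<Rightarrow> lit" where
  "decode_lit a = (a div 2, odd a)"

lemma decode_code_lit [simp]: "decode_lit (code_lit l) = l"
  by (cases l) (auto simp: decode_lit_def code_lit_def)

text \<open>The auxiliary variable p(w,l), placed above the offset M.\<close>
definition copy_var :: "nat \<Rightarrow> lit \<Rightarrow> lit \<Rightarrow> var" where
  "copy_var M w l = M + prod_encode (code_lit w, code_lit l)"

lemma copy_var_ge: "M \<le> copy_var M w l"
  by (simp add: copy_var_def)

definition cnf_vars :: "cnf \<Rightarrow> var set" where
  "cnf_vars S = fst ` set (concat S)"

lemma finite_cnf_vars: "finite (cnf_vars S)"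
  by (simp add: cnf_vars_def)

definition fresh_base :: "cnf \<Rightarrow> var set \<Rightarrow> nat" where
  "fresh_base S V = Suc (Max (V \<union> cnf_vars S))"

lemma less_fresh_base: "finite V \<Longrightarrow> v \<in> V \<union> cnf_vars S \<Longrightarrow> v < fresh_base S V"
  unfolding fresh_base_def using finite_cnf_vars by (simp add: le_imp_less_Suc)

lemma lit_less_fresh_base: "finite V \<Longrightarrow> l \<in> lits_of V \<Longrightarrow> fst l < fresh_base S V"
  using less_fresh_base by (auto simp: lits_of_def)

definition lits_list :: "var set \<Rightarrow> lit list" where
  "lits_list V = concat (map (\<lambda>v. [(v, True), (v, False)]) (sorted_list_of_set V))"

lemma set_lits_list: "finite V \<Longrightarrow> set (lits_list V) = lits_of V"
  by (auto simp: lits_list_def lits_of_def)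

lemma length_lits_list: "finite V \<Longrightarrow> length (lits_list V) = 2 * card V"
  by (simp add: lits_list_def length_concat o_def sum_list_triv)

definition propagation_clause :: "nat \<Rightarrow> lit \<Rightarrow> clause \<Rightarrow> lit \<Rightarrow> clause" where
  "propagation_clause M w c l =
     map (\<lambda>l'. (copy_var M w (neg_lit l'), False)) (filter (\<lambda>l'. l' \<noteq> l) c) @ [(copy_var M w l, True)]"

definition propagation_clauses :: "nat \<Rightarrow> lit \<Rightarrow> cnf \<Rightarrow> cnf" where
  "propagation_clauses M w S = concat (map (\<lambda>c. map (propagation_clause M w c) c) S)"

definition input_clauses :: "nat \<Rightarrow> lit \<Rightarrow> var set \<Rightarrow> cnf" where
  "input_clauses M w V = map (\<lambda>l. [neg_lit l, (copy_var M w l, True)]) (lits_list V)"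

definition conflict_clause :: "nat \<Rightarrow> lit \<Rightarrow> var \<Rightarrow> clause" where
  "conflict_clause M w v = [(copy_var M w (v, True), False), (copy_var M w (v, False), False), w]"

definition conflict_clauses :: "nat \<Rightarrow> lit \<Rightarrow> cnf \<Rightarrow> var set \<Rightarrow> cnf" where
  "conflict_clauses M w S V = map (conflict_clause M w) (sorted_list_of_set (V \<union> cnf_vars S))"

definition branch_copy :: "nat \<Rightarrow> lit \<Rightarrow> cnf \<Rightarrow> var set \<Rightarrow> cnf" where
  "branch_copy M w S V = propagation_clauses M w S @ input_clauses M w V
     @ [[(copy_var M w (neg_lit w), True)]] @ conflict_clauses M w S V"

definition upac_extension :: "cnf \<Rightarrow> var set \<Rightarrow> cnf" where
  "upac_extension S V = S @ concat (map (\<lambda>w. branch_copy (fresh_base S V) w S V) (lits_list V))"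

lemma set_upac_extension: "set S \<subseteq> set (upac_extension S V)"
  by (auto simp: upac_extension_def)

lemma set_upac_extension_cases [consumes 2]:
  assumes "finite V" "c \<in> set (upac_extension S V)"
  obtains (original) "c \<in> set S"
  | (propagation) w l d where "w \<in> lits_of V" "d \<in> set S" "l \<in> set d" "c = propagation_clause (fresh_base S V) w d l"
  | (input) w l where "w \<in> lits_of V" "l \<in> lits_of V" "c = [neg_lit l, (copy_var (fresh_base S V) w l, True)]"
  | (branch) w where "w \<in> lits_of V" "c = [(copy_var (fresh_base S V) w (neg_lit w), True)]"
  | (conflict) w v where "w \<in> lits_of V" "c = conflict_clause (fresh_base S V) w v"
  using assms
  by (auto simp: upac_extension_def branch_copy_def propagation_clauses_def input_clauses_def
      conflict_clauses_def set_lits_list)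

context
  fixes S :: cnf and V :: "var set" and w :: lit
  assumes fin: "finite V" and w: "w \<in> lits_of V"
begin

private lemma in_branch_copy:
  "c \<in> set (branch_copy (fresh_base S V) w S V) \<Longrightarrow> c \<in> set (upac_extension S V)"
  using fin w by (auto simp: upac_extension_def set_lits_list)

lemma propagation_clause_in:
  "d \<in> set S \<Longrightarrow> l \<in> set d \<Longrightarrow> propagation_clause (fresh_base S V) w d l \<in> set (upac_extension S V)"
  by (rule in_branch_copy) (auto simp: branch_copy_def propagation_clauses_def)

lemma input_clause_in:
  "l \<in> lits_of V \<Longrightarrow> [neg_lit l, (copy_var (fresh_base S V) w l, True)] \<in> set (upac_extension S V)"
  by (rule in_branch_copy) (auto simp: branch_copy_def input_clauses_def set_lits_list[OF fin])

lemma branch_clause_in: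
  "[(copy_var (fresh_base S V) w (neg_lit w), True)] \<in> set (upac_extension S V)"
  by (rule in_branch_copy) (auto simp: branch_copy_def)

lemma conflict_clause_in:
  "v \<in> V \<union> cnf_vars S \<Longrightarrow> conflict_clause (fresh_base S V) w v \<in> set (upac_extension S V)"
  by (rule in_branch_copy) (auto simp: branch_copy_def conflict_clauses_def fin finite_cnf_vars)

end

section \<open>The extension is still an encoding\<close>

definition extended_model :: "nat \<Rightarrow> assignment \<Rightarrow> (var \<Rightarrow> bool) \<Rightarrow> var \<Rightarrow> bool" where
  "extended_model M A \<tau>\<^sub>0 x = (if x < M then \<tau>\<^sub>0 x else
     (case prod_decode (x - M) of (a, b) \<Rightarrow> decode_lit a \<in> A \<or> lit_true \<tau>\<^sub>0 (decode_lit b)))"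

lemma extended_model_copy_var:
  "extended_model M A \<tau>\<^sub>0 (copy_var M w l) \<longleftrightarrow> w \<in> A \<or> lit_true \<tau>\<^sub>0 l"
  by (simp add: extended_model_def copy_var_def)

lemma lit_true_copy_var:
  "lit_true (extended_model M A \<tau>\<^sub>0) (copy_var M w l, b) \<longleftrightarrow> (b \<longleftrightarrow> w \<in> A \<or> lit_true \<tau>\<^sub>0 l)"
  by (auto simp: lit_true_def extended_model_copy_var)

lemma extended_model_below:
  "fst l < M \<Longrightarrow> lit_true (extended_model M A \<tau>\<^sub>0) l \<longleftrightarrow> lit_true \<tau>\<^sub>0 l"
  by (simp add: lit_true_def extended_model_def)

lemma clause_sat_below:
  assumes "clause_sat \<tau>\<^sub>0 c" and "\<forall>l\<in>set c. fst l < M"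
  shows "clause_sat (extended_model M A \<tau>\<^sub>0) c"
  using assms extended_model_below by (auto simp: clause_sat_iff)

lemma complete_assignment_neg:
  assumes A: "A \<in> complete_assignments V" and w: "w \<in> lits_of V" and "w \<notin> A"
  shows "neg_lit w \<in> A"
proof -
  obtain v b where wv: "w = (v, b)" by (cases w)
  have "v \<in> V" using w wv by (auto simp: lits_of_def)
  then obtain b' where "(v, b') \<in> A" using A by (auto simp: complete_assignments_def)
  then show ?thesis using assms(3) wv by (cases b; cases b') (auto simp: neg_lit_def)
qed

lemma propagation_clause_sat:
  assumes d: "clause_sat \<tau>\<^sub>0 d" and l: "l \<in> set d"
  shows "clause_sat (extended_model M A \<tau>\<^sub>0) (propagation_clause M w d l)"
proof (cases "w \<in> A \<or> lit_true \<tau>\<^sub>0 l")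
  case True
  have "(copy_var M w l, True) \<in> set (propagation_clause M w d l)"
    by (simp add: propagation_clause_def)
  moreover have "lit_true (extended_model M A \<tau>\<^sub>0) (copy_var M w l, True)"
    using True by (simp add: lit_true_def extended_model_copy_var)
  ultimately show ?thesis by (auto simp: clause_sat_iff)
next
  case False
  obtain l' where l': "l' \<in> set d" "lit_true \<tau>\<^sub>0 l'" using d by (auto simp: clause_sat_iff)
  with False have "l' \<noteq> l" by auto
  then have "(copy_var M w (neg_lit l'), False) \<in> set (propagation_clause M w d l)"
    using l'(1) by (simp add: propagation_clause_def)
  moreover have "lit_true (extended_model M A \<tau>\<^sub>0) (copy_var M w (neg_lit l'), False)"
    using l'(2) False by (simp add: lit_true_def neg_lit_def extended_model_copy_var)
  ultimately show ?thesis by (auto simp: clause_sat_iff)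
qed

lemma conflict_clause_sat:
  assumes "w \<in> A \<Longrightarrow> lit_true (extended_model M A \<tau>\<^sub>0) w"
  shows "clause_sat (extended_model M A \<tau>\<^sub>0) (conflict_clause M w v)"
proof -
  have "\<not> (lit_true \<tau>\<^sub>0 (v, True) \<and> lit_true \<tau>\<^sub>0 (v, False))" by (simp add: lit_true_def)
  with assms show ?thesis
    by (cases "w \<in> A") (auto simp: conflict_clause_def clause_sat_iff lit_true_copy_var)
qed

lemma upac_extension_satisfiable:
  assumes fin: "finite V" and A: "A \<in> complete_assignments V"
    and \<tau>\<^sub>0: "\<forall>c\<in>restrict S A. clause_sat \<tau>\<^sub>0 c"
  shows "\<forall>c\<in>restrict (upac_extension S V) A. clause_sat (extended_model (fresh_base S V) A \<tau>\<^sub>0) c"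
proof
  let ?M = "fresh_base S V" and ?\<tau> = "extended_model (fresh_base S V) A \<tau>\<^sub>0"
  have AV: "A \<subseteq> lits_of V" using A by (auto simp: complete_assignments_def)
  have on_V: "lit_true ?\<tau> l \<longleftrightarrow> lit_true \<tau>\<^sub>0 l" if "l \<in> lits_of V" for l
    using extended_model_below lit_less_fresh_base[OF fin that] by blast
  have in_A: "lit_true \<tau>\<^sub>0 l" if "l \<in> A" for l using model_restrict_unit[OF \<tau>\<^sub>0 that] .
  have sat_S: "clause_sat \<tau>\<^sub>0 d" if "d \<in> set S" for d using \<tau>\<^sub>0 that by (auto simp: restrict_def)
  fix c assume "c \<in> restrict (upac_extension S V) A"
  then consider (clause) "c \<in> set (upac_extension S V)" | (unit) l where "c = [l]" "l \<in> A"
    unfolding restrict_def by blast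
  then show "clause_sat ?\<tau> c"
  proof cases
    case clause
    with fin show ?thesis
    proof (cases rule: set_upac_extension_cases)
      case original
      have "fst l \<in> cnf_vars S" if "l \<in> set c" for l
        using original that unfolding cnf_vars_def by (intro imageI) auto
      then show ?thesis
        using sat_S[OF original] less_fresh_base[OF fin] by (intro clause_sat_below) auto
    next
      case (propagation w l d)
      show ?thesis unfolding propagation(4)
        using sat_S[OF propagation(2)] propagation(3) by (rule propagation_clause_sat)
    next
      case (input w l)
      have "lit_true ?\<tau> (neg_lit l) \<longleftrightarrow> \<not> lit_true \<tau>\<^sub>0 l" using on_V[OF input(2)] by simp
      then show ?thesis using input(3) by (auto simp: clause_sat_iff lit_true_copy_var)
    next
      case (branch w)
      have "w \<in> A \<or> neg_lit w \<in> A" using complete_assignment_neg[OF A branch(1)] by blast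
      then have "w \<in> A \<or> lit_true \<tau>\<^sub>0 (neg_lit w)" using in_A by blast
      then show ?thesis using branch(2) by (simp add: clause_sat_iff lit_true_copy_var)
    next
      case (conflict w v)
      have "lit_true ?\<tau> w" if "w \<in> A" using on_V[OF conflict(1)] in_A[OF that] by simp
      then show ?thesis unfolding conflict(2) by (rule conflict_clause_sat)
    qed
  next
    case unit
    then have "lit_true ?\<tau> l" using on_V in_A AV by blast
    then show ?thesis unfolding unit(1) by (simp add: clause_sat_iff)
  qed
qed

lemma upac_extension_encoding:
  assumes fin: "finite (cvars q)" and enc: "is_encoding S q"
  shows "is_encoding (upac_extension S (cvars q)) q"
  unfolding is_encoding_def
proof
  fix A assume A: "A \<in> complete_assignments (cvars q)"
  have "satisfiable (restrict (upac_extension S (cvars q)) A) \<longleftrightarrow> satisfiable (restrict S A)"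
  proof
    assume "satisfiable (restrict (upac_extension S (cvars q)) A)"
    then show "satisfiable (restrict S A)"
      by (rule satisfiable_subset[OF restrict_mono[OF set_upac_extension order_refl]])
  next
    assume "satisfiable (restrict S A)"
    then show "satisfiable (restrict (upac_extension S (cvars q)) A)"
      using upac_extension_satisfiable[OF fin A] by (auto simp: satisfiable_def)
  qed
  then show "satisfiable (restrict (upac_extension S (cvars q)) A) \<longleftrightarrow> satisfies A q"
    using enc A by (simp add: is_encoding_def)
qed

section \<open>Unit resolution on the extension simulates the branches\<close>

context
  fixes S :: cnf and V :: "var set" and w :: lit and I :: assignment
  assumes fin: "finite V" and w: "w \<in> lits_of V"
    and I: "I \<subseteq> lits_of V" and consistent: "\<not> contradictory I"
begin

definition sim_inv :: "assignment \<Rightarrow> bool" where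
  "sim_inv U' \<longleftrightarrow> I \<subseteq> U' \<and> (\<forall>x\<in>U'. x \<in> I \<or> (snd x \<and> fresh_base S V \<le> fst x))"

lemma sim_inv_consistent:
  assumes "sim_inv U'"
  shows "\<not> contradictory U'"
proof
  assume "contradictory U'"
  then obtain v where vT: "(v, True) \<in> U'" and vF: "(v, False) \<in> U'"
    by (auto simp: contradictory_def)
  from vF assms have "(v, False) \<in> I" by (auto simp: sim_inv_def)
  with I have "v < fresh_base S V" using lit_less_fresh_base[OF fin] by fastforce
  with vT assms have "(v, True) \<in> I" by (auto simp: sim_inv_def)
  with \<open>(v, False) \<in> I\<close> consistent show False by (auto simp: contradictory_def)
qed

lemma simulate_step:
  assumes c: "c \<in> restrict S (insert (neg_lit w) I)" and unit: "unit_wrt U c l"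
    and mirrored: "\<forall>l'\<in>U. (copy_var (fresh_base S V) w l', True) \<in> U'" and inv: "sim_inv U'"
  shows "\<exists>c'\<in>restrict (upac_extension S V) I. unit_wrt U' c' (copy_var (fresh_base S V) w l, True)"
proof -
  let ?M = "fresh_base S V" and ?C = "restrict (upac_extension S V) I"
  from c consider (clause) "c \<in> set S" | (branch) "c = [neg_lit w]" | (input) "c = [l]" "l \<in> I"
    using unit unfolding restrict_def unit_wrt_def by auto
  then show ?thesis
  proof cases
    case clause
    have "l \<in> set c" using unit by (simp add: unit_wrt_def)
    then have "propagation_clause ?M w c l \<in> ?C"
      using propagation_clause_in[OF fin w clause] by (simp add: restrict_def)
    moreover have "\<forall>l'\<in>set c. l' \<noteq> l \<longrightarrow> neg_lit l' \<in> U"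
      using unit by (auto simp: unit_wrt_def falsifies_lit_def)
    then have "unit_wrt U' (propagation_clause ?M w c l) (copy_var ?M w l, True)"
      using mirrored by (auto simp: unit_wrt_def falsifies_lit_def neg_lit_def propagation_clause_def)
    ultimately show ?thesis by blast
  next
    case branch
    then have "l = neg_lit w" using unit by (simp add: unit_wrt_def)
    moreover have "[(copy_var ?M w (neg_lit w), True)] \<in> ?C"
      using branch_clause_in[OF fin w] by (simp add: restrict_def)
    moreover have "unit_wrt U' [(copy_var ?M w (neg_lit w), True)] (copy_var ?M w (neg_lit w), True)"
      by (simp add: unit_wrt_def)
    ultimately show ?thesis by blast
  next
    case input
    then have lV: "l \<in> lits_of V" using I by auto
    have "[neg_lit l, (copy_var ?M w l, True)] \<in> ?C"
      using input_clause_in[OF fin w lV] by (simp add: restrict_def)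
    moreover have "neg_lit l \<noteq> (copy_var ?M w l, True)"
      using lit_less_fresh_base[of V l S, OF fin lV] copy_var_ge[of ?M w l] by (auto simp: neg_lit_def)
    then have "unit_wrt U' [neg_lit l, (copy_var ?M w l, True)] (copy_var ?M w l, True)"
      using input inv by (auto simp: sim_inv_def unit_wrt_def falsifies_lit_def neg_lit_def)
    ultimately show ?thesis by blast
  qed
qed

lemma simulate:
  "up_reach (restrict S (insert (neg_lit w) I)) U \<Longrightarrow>
    \<exists>U'. up_reach (restrict (upac_extension S V) I) U' \<and> sim_inv U' \<and>
         (\<forall>l\<in>U. (copy_var (fresh_base S V) w l, True) \<in> U')"
proof (induction rule: up_reach.induct)
  case start
  have "finite (lits_of V)" using fin by (simp add: lits_of_def)
  then have "finite I" using I by (rule finite_subset[rotated])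
  then have "up_reach (restrict (upac_extension S V) I) I"
    using consistent by (simp add: up_reach_units)
  then show ?case by (auto simp: sim_inv_def)
next
  case (step U c l)
  then obtain U' where R: "up_reach (restrict (upac_extension S V) I) U'" and inv: "sim_inv U'"
    and mirrored: "\<forall>l\<in>U. (copy_var (fresh_base S V) w l, True) \<in> U'"
    by blast
  obtain c' where "c' \<in> restrict (upac_extension S V) I"
    "unit_wrt U' c' (copy_var (fresh_base S V) w l, True)"
    using simulate_step[OF step.hyps(3,4) mirrored inv] by blast
  with R sim_inv_consistent[OF inv]
  have "up_reach (restrict (upac_extension S V) I) (insert (copy_var (fresh_base S V) w l, True) U')"
    by (intro up_reach.step)
  moreover have "sim_inv (insert (copy_var (fresh_base S V) w l, True) U')"
    using inv copy_var_ge by (auto simp: sim_inv_def)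
  ultimately show ?case using mirrored by blast
qed

lemma refutation_derives:
  assumes E: "up_empty_clause (restrict S (insert (neg_lit w) I))"
  shows "up_infers (restrict (upac_extension S V) I) w"
proof -
  let ?M = "fresh_base S V"
  from E obtain U where RU: "up_reach (restrict S (insert (neg_lit w) I)) U" and "contradictory U"
    by (auto simp: up_empty_clause_def)
  then obtain v where vT: "(v, True) \<in> U" and vF: "(v, False) \<in> U"
    by (auto simp: contradictory_def)
  from simulate[OF RU] obtain U' where R: "up_reach (restrict (upac_extension S V) I) U'"
    and inv: "sim_inv U'" and mirrored: "\<forall>l\<in>U. (copy_var ?M w l, True) \<in> U'"
    by blast
  have "v \<in> V \<union> cnf_vars S"
    using up_reach_vars[OF RU vT] I w
    by (auto simp: restrict_def cnf_vars_def lits_of_def neg_lit_def)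
  then have "conflict_clause ?M w v \<in> restrict (upac_extension S V) I"
    using conflict_clause_in[OF fin w] by (simp add: restrict_def)
  moreover have "unit_wrt U' (conflict_clause ?M w v) w"
    using mirrored vT vF lit_less_fresh_base[of V w S, OF fin w] copy_var_ge[of ?M w]
    by (auto simp: conflict_clause_def unit_wrt_def falsifies_lit_def neg_lit_def)
  ultimately have "up_reach (restrict (upac_extension S V) I) (insert w U')"
    using R sim_inv_consistent[OF inv] by (intro up_reach.step)
  then show ?thesis by (auto simp: up_infers_def)
qed

end

theorem upac_extension_correct:
  assumes fin: "finite (cvars q)" and enc: "is_encoding S q" and upi: "is_upi S q"
  defines "C \<equiv> upac_extension S (cvars q)"
  shows "is_encoding C q" and "is_upi C q" and "is_upac C q"
proof -
  show enc': "is_encoding C q" unfolding C_def using fin enc by (rule upac_extension_encoding)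
  show "is_upi C q" using upi_of_superset[OF enc' _ upi] set_upac_extension C_def by blast
  show "is_upac C q"
  proof (rule upac_of_superset[OF enc' _ upi])
    show "set S \<subseteq> set C" unfolding C_def by (rule set_upac_extension)
  next
    fix I w assume "I \<in> partial_assignments (cvars q)" "w \<in> lits_of (cvars q)"
      "up_empty_clause (restrict S (insert (neg_lit w) I))"
    then show "up_infers (restrict C I) w"
      unfolding C_def using refutation_derives[OF fin] by (auto simp: partial_assignments_def)
  qed
qed

section \<open>Size of the extension\<close>

lemma cnf_size_append [simp]: "cnf_size (a @ b) = cnf_size a + cnf_size b"
  by (simp add: cnf_size_def)

lemma cnf_size_concat: "cnf_size (concat xs) = sum_list (map cnf_size xs)"
  by (induction xs) (auto simp: cnf_size_def)

lemma sum_list_bound: "(\<forall>x\<in>set xs. f x \<le> (B::nat)) \<Longrightarrow> sum_list (map f xs) \<le> length xs * B"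
  by (induction xs) auto

lemma sum_list_length_mult: "sum_list (map (\<lambda>c. length c * k) S) = cnf_size S * k"
  by (induction S) (auto simp: cnf_size_def algebra_simps)

lemma length_le_cnf_size: "c \<in> set S \<Longrightarrow> length c \<le> cnf_size S"
  unfolding cnf_size_def by (simp add: member_le_sum_list)

text \<open>Each clause of S of length k yields k propagation clauses of length k.\<close>
lemma size_propagation_clauses:
  "cnf_size (propagation_clauses M w S) \<le> cnf_size S * (cnf_size S + 1)"
proof -
  let ?s = "cnf_size S"
  have "cnf_size (propagation_clauses M w S) = sum_list (map (\<lambda>c. cnf_size (map (propagation_clause M w c) c)) S)"
    by (simp add: propagation_clauses_def cnf_size_concat o_def)
  also have "\<dots> \<le> sum_list (map (\<lambda>c. length c * (?s + 1)) S)"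
  proof (rule sum_list_mono)
    fix c assume c: "c \<in> set S"
    have "cnf_size (map (propagation_clause M w c) c) =
        sum_list (map (\<lambda>l. length (filter (\<lambda>l'. l' \<noteq> l) c) + 1) c)"
      by (simp add: cnf_size_def o_def propagation_clause_def)
    also have "\<dots> \<le> length c * (?s + 1)"
      by (rule sum_list_bound)
        (use length_le_cnf_size[OF c] in \<open>auto intro: order_trans[OF length_filter_le]\<close>)
    finally show "cnf_size (map (propagation_clause M w c) c) \<le> length c * (?s + 1)" .
  qed
  also have "\<dots> = ?s * (?s + 1)" by (rule sum_list_length_mult)
  finally show ?thesis .
qed

lemma card_cnf_vars: "card (cnf_vars S) \<le> cnf_size S"
proof -
  have "card (cnf_vars S) \<le> card (set (concat S))"
    unfolding cnf_vars_def by (rule card_image_le) simp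
  also have "\<dots> \<le> length (concat S)" by (rule card_length)
  also have "\<dots> = cnf_size S" by (simp add: cnf_size_def length_concat)
  finally show ?thesis .
qed

lemma size_branch_copy:
  assumes fin: "finite V"
  shows "cnf_size (branch_copy M w S V) \<le> cnf_size S * cnf_size S + 4 * cnf_size S + 7 * card V + 1"
proof -
  have inp: "cnf_size (input_clauses M w V) = 4 * card V"
    by (simp add: input_clauses_def cnf_size_def o_def sum_list_triv length_lits_list[OF fin])
  have "cnf_size (conflict_clauses M w S V) = 3 * card (V \<union> cnf_vars S)"
    using fin finite_cnf_vars
    by (simp add: conflict_clauses_def conflict_clause_def cnf_size_def o_def sum_list_triv)
  also have "card (V \<union> cnf_vars S) \<le> card V + cnf_size S"
    using card_Un_le[of V "cnf_vars S"] card_cnf_vars[of S] by linarith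
  finally have con: "cnf_size (conflict_clauses M w S V) \<le> 3 * (card V + cnf_size S)" by simp
  have "cnf_size (branch_copy M w S V) = cnf_size (propagation_clauses M w S)
      + cnf_size (input_clauses M w V) + 1 + cnf_size (conflict_clauses M w S V)"
    by (simp add: branch_copy_def cnf_size_def)
  then show ?thesis using size_propagation_clauses[of M w S] inp con
    by (simp add: algebra_simps)
qed

text \<open>There is one copy for each of the 2|V| literals on V.\<close>
lemma size_upac_extension:
  assumes fin: "finite V"
  shows "cnf_size (upac_extension S V) \<le>
    cnf_size S + 2 * card V * (cnf_size S * cnf_size S + 4 * cnf_size S + 7 * card V + 1)"
proof -
  have "cnf_size (upac_extension S V) =
      cnf_size S + sum_list (map (\<lambda>w. cnf_size (branch_copy (fresh_base S V) w S V)) (lits_list V))"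
    by (simp add: upac_extension_def cnf_size_concat o_def)
  also have "sum_list (map (\<lambda>w. cnf_size (branch_copy (fresh_base S V) w S V)) (lits_list V)) \<le>
      length (lits_list V) * (cnf_size S * cnf_size S + 4 * cnf_size S + 7 * card V + 1)"
    by (rule sum_list_bound) (use size_branch_copy[OF fin] in blast)
  finally show ?thesis by (simp add: length_lits_list[OF fin])
qed

theorem mainTheorem3:
  fixes Q :: "constraint set"
  assumes fin: "\<forall>q\<in>Q. finite (cvars q)"
    and upi: "\<exists>P :: nat poly. \<forall>q\<in>Q. \<exists>\<Sigma>.
               is_encoding \<Sigma> q \<and> is_upi \<Sigma> q \<and> cnf_size \<Sigma> \<le> poly P (card (cvars q))"
  shows "\<exists>P' :: nat poly. \<forall>q\<in>Q. \<exists>\<Sigma>.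
           is_encoding \<Sigma> q \<and> is_upi \<Sigma> q \<and> is_upac \<Sigma> q \<and>
           cnf_size \<Sigma> \<le> poly P' (card (cvars q))"
proof -
  from upi obtain P :: "nat poly" where P: "\<forall>q\<in>Q. \<exists>\<Sigma>.
      is_encoding \<Sigma> q \<and> is_upi \<Sigma> q \<and> cnf_size \<Sigma> \<le> poly P (card (cvars q))" by blast
  define P' where "P' = P + [:0, 2:] * (P * P + smult 4 P + [:1, 7:])"
  have "\<exists>\<Sigma>. is_encoding \<Sigma> q \<and> is_upi \<Sigma> q \<and> is_upac \<Sigma> q \<and> cnf_size \<Sigma> \<le> poly P' (card (cvars q))"
    if q: "q \<in> Q" for q
  proof -
    obtain S where S: "is_encoding S q" "is_upi S q" "cnf_size S \<le> poly P (card (cvars q))"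
      using P q by blast
    let ?s = "cnf_size S" and ?p = "poly P (card (cvars q))" and ?n = "card (cvars q)"
    have f: "finite (cvars q)" using fin q by blast
    have "cnf_size (upac_extension S (cvars q)) \<le> ?s + 2 * ?n * (?s * ?s + 4 * ?s + 7 * ?n + 1)"
      by (rule size_upac_extension[OF f])
    also have "\<dots> \<le> ?p + 2 * ?n * (?p * ?p + 4 * ?p + 7 * ?n + 1)"
      using S(3) by (intro add_mono mult_le_mono order_refl) auto
    also have "\<dots> = poly P' ?n" by (simp add: P'_def algebra_simps)
    finally show ?thesis using upac_extension_correct[OF f S(1,2)] by blast
  qed
  then show ?thesis by blast
qed

end
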